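(* Let $S=S(s,t,u,v;z)=\sum_{n\ge1}\sum_{D\in\mathcal A_n}s^{\mathrm{turn}(D)}t^{\mathrm{segment}(D)}u^{\mathrm{red}(D)}v^{\mathrm{return}(D)}z^n$, and define $B$ and $R$ in the same way with $\mathcal A_n$ replaced by $\mathcal B_n$ and $\mathcal R_n$ respectively. Then, as formal power series in $z$, $$S=uvz\,(1+S|_{v=1})(1+sB),\qquad B=vz\,(t+tR|_{v=1}+B|_{v=1})(1+sB),\qquad R=uvz\,(1+R|_{v=1}+B|_{v=1})(1+sB),$$ where $F|_{v=1}$ denotes $F$ with $v$ set to $1$.
   Context: A two-colored Dyck path of length $n$ is a lattice path from $(0,0)$ to $(n,n)$ with unit east and north steps never going above $y=x$, each east step colored black or red; it is encoded by $d_1\cdots d_n$ where $d_i$ is the number of north steps before the $i$-th east step, together with the colors. Condition (c-1): all east steps of height $0$ are red. Condition (c-2): the first east step of each positive height is black. $\mathcal A_n$ = two-colored Dyck paths of length $n$ satisfying (c-1) and (c-2); $\mathcal B_n$ (resp. $\mathcal R_n$) = two-colored Dyck paths of length $n$ satisfying (c-2) whose first east step is black (resp. red). Statistics: $\mathrm{turn}(D)$ = (number of east steps immediately followed by a north step) $-1$, equivalently $|\{i\in[n-1]:d_i<d_{i+1}\}|$; $\mathrm{segment}(D)$ = number of maximal runs of consecutive east steps that are all black and of equal height; $\mathrm{red}(D)$ = number of red east steps; $\mathrm{return}(D)$ = number of lattice points $(i,i)$, $1\le i\le n$, lying on $D$. *)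

theory Defs
  imports "HOL-Computational_Algebra.Formal_Power_Series"
begin

text \<open>A two-colored Dyck path of length n is encoded as a list p of length n;
  the i-th entry (0-indexed) is (d_{i+1}, red_{i+1}): the number of north steps
  before the (i+1)-th east step, and whether that east step is red (True) or
  black (False).\<close>

type_synonym cpath = "(nat \<times> bool) list"

definition dyck :: "nat \<Rightarrow> cpath \<Rightarrow> bool" where
  "dyck n p \<longleftrightarrow> length p = n \<and> sorted (map fst p) \<and> (\<forall>i<n. fst (p ! i) \<le> i)"

definition cond1 :: "cpath \<Rightarrow> bool" where
  "cond1 p \<longleftrightarrow> (\<forall>i<length p. fst (p ! i) = 0 \<longrightarrow> snd (p ! i))"

text \<open>(c-2): the first east step of each positive height is black.\<close>
definition cond2 :: "cpath \<Rightarrow> bool" where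
  "cond2 p \<longleftrightarrow> (\<forall>i<length p. 0 < fst (p ! i) \<and> (i = 0 \<or> fst (p ! (i - 1)) < fst (p ! i))
                     \<longrightarrow> \<not> snd (p ! i))"

definition setA :: "nat \<Rightarrow> cpath set" where
  "setA n = {p. dyck n p \<and> cond1 p \<and> cond2 p}"

definition setB :: "nat \<Rightarrow> cpath set" where
  "setB n = {p. dyck n p \<and> cond2 p \<and> 0 < n \<and> \<not> snd (p ! 0)}"

definition setR :: "nat \<Rightarrow> cpath set" where
  "setR n = {p. dyck n p \<and> cond2 p \<and> 0 < n \<and> snd (p ! 0)}"

definition turn :: "cpath \<Rightarrow> nat" where
  "turn p = card {i. i + 1 < length p \<and> fst (p ! i) < fst (p ! (i + 1))}"

text \<open>Number of maximal runs of consecutive black east steps of equal height: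
  counted by their first elements.\<close>
definition segment :: "cpath \<Rightarrow> nat" where
  "segment p = card {i. i < length p \<and> \<not> snd (p ! i) \<and>
      (i = 0 \<or> snd (p ! (i - 1)) \<or> fst (p ! (i - 1)) \<noteq> fst (p ! i))}"

definition red :: "cpath \<Rightarrow> nat" where
  "red p = card {i. i < length p \<and> snd (p ! i)}"

text \<open>Lattice points of the path from (0,0) to (n,n): on the vertical line x,
  the path occupies heights from d_x (0 for x = 0) up to d_{x+1} (n for x = n).\<close>
definition lattice_points :: "cpath \<Rightarrow> (nat \<times> nat) set" where
  "lattice_points p = {(x, y). x \<le> length p \<and>
      (if x = 0 then 0 else fst (p ! (x - 1))) \<le> y \<and>
      y \<le> (if x < length p then fst (p ! x) else length p)}"

definition return :: "cpath \<Rightarrow> nat" where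
  "return p = card {i \<in> {1..length p}. (i, i) \<in> lattice_points p}"

definition wt :: "'a::comm_ring_1 \<Rightarrow> 'a \<Rightarrow> 'a \<Rightarrow> 'a \<Rightarrow> cpath \<Rightarrow> 'a" where
  "wt s t u v p = s ^ turn p * t ^ segment p * u ^ red p * v ^ return p"

text \<open>Generating function  sum_{n>=1} sum_{D in X_n} weight(D) z^n  as a formal
  power series in z, with s,t,u,v elements of an arbitrary commutative ring
  (taking the ring to be a polynomial ring recovers the formal identity).\<close>
definition gf :: "(nat \<Rightarrow> cpath set) \<Rightarrow> 'a::comm_ring_1 \<Rightarrow> 'a \<Rightarrow> 'a \<Rightarrow> 'a \<Rightarrow> 'a fps" where
  "gf X s t u v = Abs_fps (\<lambda>n. if n = 0 then 0 else (\<Sum>p\<in>X n. wt s t u v p))"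

end

theory Submission
  imports Defs
begin

(* Every nonempty path D splits at its first return (k, k) to the diagonal: D consists of a
   first east step at height 0 of some colour c, then a path E of length k - 1 (which, shifted
   one step to the right, stays strictly below the diagonal), then a path F of length n - k
   translated up by k.  Under this bijection red is additive (plus one if c is red), turn is
   additive plus one ascent into F when F is nonempty, return(D) = 1 + return(F) since E never
   touches the diagonal (so E is weighted at v = 1), and the first step opens a new segment
   exactly when it is black and E does not continue it with a black step at height 0.
   Condition (c-2) for D amounts to (c-2) for E and F together with F starting black, since
   F starts at a new height; (c-1) for D amounts to c being red and (c-1) for E.  Summing over
   k, the coefficient of z^n becomes a convolution, which is each of the three identities. *)

section \<open>Local statistics via predecessor pairs\<close>

(* turn, segment and (c-2) only inspect each east step together with its predecessor
   (None for the first step); this is what makes them additive under concatenation. *)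

definition pred_pairs :: "'b option \<Rightarrow> 'b list \<Rightarrow> ('b option \<times> 'b) list" where
  "pred_pairs x0 xs = zip (x0 # map Some xs) xs"

definition last_or :: "'b option \<Rightarrow> 'b list \<Rightarrow> 'b option" where
  "last_or x0 xs = (if xs = [] then x0 else Some (last xs))"

definition count_pairs :: "('b option \<Rightarrow> 'b \<Rightarrow> bool) \<Rightarrow> 'b option \<Rightarrow> 'b list \<Rightarrow> nat" where
  "count_pairs G x0 xs = length (filter (case_prod G) (pred_pairs x0 xs))"

definition all_pairs :: "('b option \<Rightarrow> 'b \<Rightarrow> bool) \<Rightarrow> 'b option \<Rightarrow> 'b list \<Rightarrow> bool" where
  "all_pairs G x0 xs = list_all (case_prod G) (pred_pairs x0 xs)"

lemma pred_pairs_Nil [simp]: "pred_pairs x0 [] = []"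
  and pred_pairs_Cons [simp]: "pred_pairs x0 (x # xs) = (x0, x) # pred_pairs (Some x) xs"
  by (simp_all add: pred_pairs_def)

lemma nth_pred_pairs:
  "i < length xs \<Longrightarrow> pred_pairs x0 xs ! i = (if i = 0 then x0 else Some (xs ! (i - 1)), xs ! i)"
  by (cases i) (simp_all add: pred_pairs_def)

lemma length_pred_pairs [simp]: "length (pred_pairs x0 xs) = length xs"
  by (simp add: pred_pairs_def)

lemma last_or_Cons [simp]: "last_or x0 (x # xs) = last_or (Some x) xs"
  by (simp add: last_or_def)

lemma count_pairs_Nil [simp]: "count_pairs G x0 [] = 0"
  and count_pairs_Cons [simp]:
    "count_pairs G x0 (x # xs) = (if G x0 x then 1 else 0) + count_pairs G (Some x) xs"
  by (simp_all add: count_pairs_def)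

lemma all_pairs_Nil [simp]: "all_pairs G x0 []"
  and all_pairs_Cons [simp]: "all_pairs G x0 (x # xs) \<longleftrightarrow> G x0 x \<and> all_pairs G (Some x) xs"
  by (simp_all add: all_pairs_def)

lemma count_pairs_append:
  "count_pairs G x0 (xs @ ys) = count_pairs G x0 xs + count_pairs G (last_or x0 xs) ys"
  by (induction xs arbitrary: x0) (simp_all add: last_or_def)

lemma all_pairs_append:
  "all_pairs G x0 (xs @ ys) \<longleftrightarrow> all_pairs G x0 xs \<and> all_pairs G (last_or x0 xs) ys"
  by (induction xs arbitrary: x0) (simp_all add: last_or_def)

lemma count_pairs_map_Some:
  assumes "\<And>a b. G (Some (f a)) (f b) = G (Some a) b"
  shows "count_pairs G (Some (f a)) (map f xs) = count_pairs G (Some a) xs"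
  using assms by (induction xs arbitrary: a) simp_all

lemma all_pairs_map_Some:
  assumes "\<And>a b. G (Some (f a)) (f b) = G (Some a) b"
  shows "all_pairs G (Some (f a)) (map f xs) = all_pairs G (Some a) xs"
  using assms by (induction xs arbitrary: a) simp_all

lemma count_pairs_conv_card:
  "count_pairs G x0 xs =
     card {i. i < length xs \<and> G (if i = 0 then x0 else Some (xs ! (i - 1))) (xs ! i)}"
  unfolding count_pairs_def length_filter_conv_card length_pred_pairs
  by (intro arg_cong[where f = card] Collect_cong) (auto simp: nth_pred_pairs)

lemma all_pairs_conv_all_nth:
  "all_pairs G x0 xs \<longleftrightarrow> (\<forall>i < length xs. G (if i = 0 then x0 else Some (xs ! (i - 1))) (xs ! i))"
  unfolding all_pairs_def list_all_length length_pred_pairs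
  by (intro all_cong) (auto simp: nth_pred_pairs)

definition ascent :: "(nat \<times> bool) option \<Rightarrow> nat \<times> bool \<Rightarrow> bool" where
  "ascent pr x \<longleftrightarrow> (case pr of None \<Rightarrow> False | Some y \<Rightarrow> fst y < fst x)"

definition segment_start :: "(nat \<times> bool) option \<Rightarrow> nat \<times> bool \<Rightarrow> bool" where
  "segment_start pr x \<longleftrightarrow> \<not> snd x \<and> (case pr of None \<Rightarrow> True | Some y \<Rightarrow> snd y \<or> fst y \<noteq> fst x)"

definition black_if_first :: "(nat \<times> bool) option \<Rightarrow> nat \<times> bool \<Rightarrow> bool" where
  "black_if_first pr x \<longleftrightarrow>
     0 < fst x \<and> (case pr of None \<Rightarrow> True | Some y \<Rightarrow> fst y < fst x) \<longrightarrow> \<not> snd x"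

lemma turn_eq_count_pairs: "turn p = count_pairs ascent None p"
proof -
  have "{i. i < length p \<and> ascent (if i = 0 then None else Some (p ! (i - 1))) (p ! i)}
      = Suc ` {i. i + 1 < length p \<and> fst (p ! i) < fst (p ! (i + 1))}"
    by (auto simp: ascent_def image_iff gr0_conv_Suc)
  then show ?thesis
    unfolding turn_def count_pairs_conv_card by (simp add: card_image)
qed

lemma segment_eq_count_pairs: "segment p = count_pairs segment_start None p"
  unfolding segment_def count_pairs_conv_card
  by (rule arg_cong[where f = card]) (auto simp: segment_start_def)

lemma cond2_eq_all_pairs: "cond2 p \<longleftrightarrow> all_pairs black_if_first None p"
  unfolding cond2_def all_pairs_conv_all_nth by (auto simp: black_if_first_def)

lemma cond1_eq_list_all: "cond1 p \<longleftrightarrow> list_all (\<lambda>x. fst x = 0 \<longrightarrow> snd x) p"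
  unfolding cond1_def list_all_length by simp

lemma red_eq_length_filter: "red p = length (filter snd p)"
  unfolding red_def length_filter_conv_card by simp

section \<open>Dyck paths and returns\<close>

abbreviation dyck_path :: "cpath \<Rightarrow> bool" where
  "dyck_path p \<equiv> dyck (length p) p"

lemma dyck_length: "dyck n p \<Longrightarrow> length p = n"
  by (simp add: dyck_def)

lemma dyck_path_if_dyck: "dyck n p \<Longrightarrow> dyck_path p"
  by (simp add: dyck_length)

lemma dyck_height_less: "dyck n p \<Longrightarrow> x \<in> set p \<Longrightarrow> fst x < n"
  unfolding dyck_def in_set_conv_nth by force

lemma dyck_Cons_height: "dyck n (x # p) \<Longrightarrow> fst x = 0"
  unfolding dyck_def by force

lemma dyck_0_iff: "dyck 0 p \<longleftrightarrow> p = []"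
  by (auto simp: dyck_def)

lemma finite_dyck: "finite {p. dyck n p \<and> P p}"
proof (rule finite_subset)
  show "{p. dyck n p \<and> P p} \<subseteq> {xs. set xs \<subseteq> {0..<n} \<times> UNIV \<and> length xs = n}"
    using dyck_height_less by (fastforce simp: dyck_def)
  show "finite {xs. set xs \<subseteq> {0..<n} \<times> (UNIV :: bool set) \<and> length xs = n}"
    by (rule finite_lists_length_eq) simp
qed

fun diag_count :: "nat \<Rightarrow> cpath \<Rightarrow> nat" where
  "diag_count j [] = 0"
| "diag_count j (x # xs) = (if fst x = j then 1 else 0) + diag_count (Suc j) xs"

lemma diag_count_conv_card: "diag_count j p = card {i. i < length p \<and> fst (p ! i) = i + j}"
proof (induction p arbitrary: j)
  case (Cons x p)
  have "{i. i < length (x # p) \<and> fst ((x # p) ! i) = i + j}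
      = (if fst x = j then {0} else {}) \<union> Suc ` {i. i < length p \<and> fst (p ! i) = i + Suc j}"
    (is "?lhs = ?rhs")
  proof (rule set_eqI)
    show "i \<in> ?lhs \<longleftrightarrow> i \<in> ?rhs" for i
      by (cases i) auto
  qed
  then show ?case
    using Cons.IH by (simp add: card_image)
qed simp

lemma diag_count_append: "diag_count j (xs @ ys) = diag_count j xs + diag_count (j + length xs) ys"
  by (induction xs arbitrary: j) simp_all

lemma diag_count_below:
  assumes "\<And>i. i < length xs \<Longrightarrow> fst (xs ! i) < i + j"
  shows "diag_count j xs = 0"
proof -
  have "{i. i < length xs \<and> fst (xs ! i) = i + j} = {}"
    using assms by fastforce
  then show ?thesis
    by (simp add: diag_count_conv_card)
qed

lemma return_eq_diag_count:
  assumes "dyck n p"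
  shows "return p = diag_count 0 p"
proof (cases n)
  case 0
  then show ?thesis using assms by (simp add: dyck_0_iff return_def)
next
  case (Suc m)
  have len: "length p = n" and below: "\<And>i. i < n \<Longrightarrow> fst (p ! i) \<le> i"
    using assms by (auto simp: dyck_def)
  define T where "T = {i. 0 < i \<and> i < n \<and> fst (p ! i) = i}"
  (* (i, i) lies on the path iff i = n or the east step with 0-based index i has height i *)
  have "{i \<in> {1..length p}. (i, i) \<in> lattice_points p} = insert n T"
  proof -
    have "fst (p ! (i - 1)) \<le> i" if "1 \<le> i" "i \<le> n" for i
    proof -
      have "i - 1 < n"
        using that by simp
      then show ?thesis
        using below by fastforce
    qed
    then show ?thesis
      using below Suc by (force simp: lattice_points_def len T_def)
  qed
  moreover have "{i. i < length p \<and> fst (p ! i) = i + 0} = insert 0 T"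
    using below[of 0] Suc len by (auto simp: T_def)
  moreover have "finite T" "n \<notin> T" "0 \<notin> T"
    by (simp_all add: T_def)
  ultimately show ?thesis
    by (simp add: return_def diag_count_conv_card)
qed

definition raise_by :: "nat \<Rightarrow> nat \<times> bool \<Rightarrow> nat \<times> bool" where
  "raise_by k x = (fst x + k, snd x)"

lemma fst_raise_by [simp]: "fst (raise_by k x) = fst x + k"
  and snd_raise_by [simp]: "snd (raise_by k x) = snd x"
  by (simp_all add: raise_by_def)

lemma inj_raise_by: "inj (raise_by k)"
  by (rule injI) (simp add: raise_by_def prod_eq_iff)

lemma diag_count_raise_by: "diag_count (j + k) (map (raise_by k) xs) = diag_count j xs"
proof (induction xs arbitrary: j)
  case (Cons x xs)
  show ?case
    using Cons.IH[of "Suc j"] by simp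
qed simp

section \<open>The first-return decomposition\<close>

definition return_join :: "bool \<Rightarrow> cpath \<Rightarrow> cpath \<Rightarrow> cpath" where
  "return_join c E F = (0, c) # E @ map (raise_by (Suc (length E))) F"

lemma length_return_join [simp]: "length (return_join c E F) = Suc (length E + length F)"
  by (simp add: return_join_def)

lemma nth_return_join_0 [simp]: "return_join c E F ! 0 = (0, c)"
  by (simp add: return_join_def)

lemma dyck_return_join:
  assumes E: "dyck_path E" and F: "dyck_path F"
  shows "dyck_path (return_join c E F)"
proof -
  let ?k = "Suc (length E)"
  have "sorted (map fst (return_join c E F))"
  proof -
    have "sorted (map (\<lambda>x. fst x + ?k) F)"
      using F by (simp add: dyck_def sorted_iff_nth_mono)
    moreover have "fst x < ?k" if "x \<in> set E" for x
      using dyck_height_less[OF E that] by simp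
    ultimately show ?thesis
      using E by (fastforce simp: dyck_def return_join_def sorted_append comp_def)
  qed
  moreover have "fst (return_join c E F ! i) \<le> i" if "i < Suc (length E + length F)" for i
  proof (cases "i = 0 \<or> i \<le> length E")
    case True
    then show ?thesis
      using E by (cases i) (auto simp: dyck_def return_join_def nth_append le_SucI Suc_le_eq)
  next
    case False
    then have idx: "i - Suc (length E) < length F"
      using that by linarith
    then have "fst (F ! (i - Suc (length E))) \<le> i - Suc (length E)"
      using F by (simp add: dyck_def)
    then show ?thesis
      using False idx by (cases i) (auto simp: return_join_def nth_append)
  qed
  ultimately show ?thesis
    by (simp add: dyck_def)
qed

lemma ascent_raise_by [simp]: "ascent (Some (raise_by k a)) (raise_by k b) = ascent (Some a) b"
  and segment_start_raise_by [simp]: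
    "segment_start (Some (raise_by k a)) (raise_by k b) = segment_start (Some a) b"
  and black_if_first_raise_by [simp]:
    "black_if_first (Some (raise_by k a)) (raise_by k b) = black_if_first (Some a) b"
  by (auto simp: ascent_def segment_start_def black_if_first_def)

lemma last_or_prefix_height:
  assumes "dyck_path E"
  obtains y where "last_or (Some (0, c)) E = Some y" "fst y < Suc (length E)"
proof -
  have "last ((0, c) # E) \<in> set ((0, c) # E)"
    by (rule last_in_set) simp
  then have "fst (last ((0, c) # E)) < Suc (length E)"
    using dyck_height_less[OF assms] by fastforce
  moreover have "last_or (Some (0, c)) E = Some (last ((0, c) # E))"
    by (simp add: last_or_def)
  ultimately show ?thesis
    using that by blast
qed

lemma cond1_return_join: "cond1 (return_join c E F) \<longleftrightarrow> c \<and> cond1 E"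
  by (auto simp: cond1_eq_list_all return_join_def list_all_iff)

lemma cond2_return_join:
  assumes E: "dyck_path E" and F: "dyck_path F"
  shows "cond2 (return_join c E F) \<longleftrightarrow> cond2 E \<and> cond2 F \<and> (F \<noteq> [] \<longrightarrow> \<not> snd (F ! 0))"
proof -
  obtain y where y: "last_or (Some (0, c)) E = Some y" "fst y < Suc (length E)"
    using last_or_prefix_height[OF E] .
  have "all_pairs black_if_first (Some (0, c)) E = cond2 E"
    using E by (cases E) (auto simp: cond2_eq_all_pairs black_if_first_def dest: dyck_Cons_height)
  moreover have "all_pairs black_if_first (Some y) (map (raise_by (Suc (length E))) F)
      \<longleftrightarrow> cond2 F \<and> (F \<noteq> [] \<longrightarrow> \<not> snd (F ! 0))"
    using F y(2) by (cases F)
      (auto simp: cond2_eq_all_pairs all_pairs_map_Some[of black_if_first "raise_by (Suc (length E))", OF black_if_first_raise_by]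
        black_if_first_def dest: dyck_Cons_height)
  ultimately show ?thesis
    using y(1) by (simp add: cond2_eq_all_pairs return_join_def all_pairs_append black_if_first_def)
qed

lemma turn_return_join:
  assumes E: "dyck_path E" and F: "dyck_path F"
  shows "turn (return_join c E F) = turn E + (if F = [] then 0 else 1) + turn F"
proof -
  obtain y where y: "last_or (Some (0, c)) E = Some y" "fst y < Suc (length E)"
    using last_or_prefix_height[OF E] .
  have "count_pairs ascent (Some (0, c)) E = turn E"
    using E by (cases E) (auto simp: turn_eq_count_pairs ascent_def dest: dyck_Cons_height)
  moreover have "count_pairs ascent (Some y) (map (raise_by (Suc (length E))) F)
      = (if F = [] then 0 else 1) + turn F"
    using F y(2) by (cases F)
      (auto simp: turn_eq_count_pairs count_pairs_map_Some[of ascent "raise_by (Suc (length E))", OF ascent_raise_by] ascent_def)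
  ultimately show ?thesis
    using y(1) by (simp add: turn_eq_count_pairs return_join_def count_pairs_append ascent_def)
qed

lemma segment_return_join:
  assumes E: "dyck_path E" and F: "dyck_path F"
  shows "segment (return_join c E F) =
    (if \<not> c \<and> (E = [] \<or> snd (E ! 0)) then 1 else 0) + segment E + segment F"
proof -
  obtain y where y: "last_or (Some (0, c)) E = Some y" "fst y < Suc (length E)"
    using last_or_prefix_height[OF E] .
  have "(if \<not> c then 1 else 0) + count_pairs segment_start (Some (0, c)) E
      = (if \<not> c \<and> (E = [] \<or> snd (E ! 0)) then 1 else 0) + segment E"
    using E by (cases E) (auto simp: segment_eq_count_pairs segment_start_def dest: dyck_Cons_height)
  moreover have "count_pairs segment_start (Some y) (map (raise_by (Suc (length E))) F) = segment F"
    using F y(2) by (cases F)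
      (auto simp: segment_eq_count_pairs count_pairs_map_Some[of segment_start "raise_by (Suc (length E))", OF segment_start_raise_by]
        segment_start_def dest: dyck_Cons_height)
  ultimately show ?thesis
    using y(1) by (simp add: segment_eq_count_pairs return_join_def count_pairs_append segment_start_def)
qed

lemma red_return_join: "red (return_join c E F) = (if c then 1 else 0) + red E + red F"
proof -
  have "filter snd (map (raise_by k) F) = map (raise_by k) (filter snd F)" for k
    by (induction F) simp_all
  then show ?thesis
    by (simp add: red_eq_length_filter return_join_def)
qed

lemma statistics_Nil [simp]: "turn [] = 0" "segment [] = 0" "red [] = 0" "return [] = 0"
  by (simp_all add: turn_def segment_def red_def return_def)

lemma return_return_join:
  assumes E: "dyck_path E" and F: "dyck_path F"
  shows "return (return_join c E F) = Suc (return F)"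
proof -
  have "diag_count 1 E = 0"
    using E by (intro diag_count_below) (simp add: dyck_def le_imp_less_Suc)
  moreover have "diag_count (Suc (length E)) (map (raise_by (Suc (length E))) F) = diag_count 0 F"
    using diag_count_raise_by[of 0 "Suc (length E)" F] by simp
  ultimately show ?thesis
    using return_eq_diag_count[OF dyck_return_join[OF E F]] return_eq_diag_count[OF F]
    by (simp add: return_join_def diag_count_append)
qed

lemma wt_return_join:
  assumes "dyck_path E" "dyck_path F"
  shows "wt s t u v (return_join c E F) =
    (if c then u else 1) * v * ((if \<not> c \<and> (E = [] \<or> snd (E ! 0)) then t else 1) * wt s t u 1 E)
      * (if F = [] then 1 else s * wt s t u v F)"
  using assms
  by (cases F) (auto simp: wt_def turn_return_join segment_return_join return_return_join
      red_return_join power_add mult_ac)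

definition first_return :: "cpath \<Rightarrow> nat" where
  "first_return D = (LEAST i. 0 < i \<and> (i = length D \<or> fst (D ! i) = i))"

lemma first_return_return_join:
  assumes E: "dyck_path E" and F: "dyck_path F"
  shows "first_return (return_join c E F) = Suc (length E)"
  unfolding first_return_def
proof (rule Least_equality)
  show "0 < Suc (length E) \<and> (Suc (length E) = length (return_join c E F)
      \<or> fst (return_join c E F ! Suc (length E)) = Suc (length E))"
    using F by (cases F) (auto simp: return_join_def nth_append dest: dyck_Cons_height)
next
  fix i
  assume i: "0 < i \<and> (i = length (return_join c E F) \<or> fst (return_join c E F ! i) = i)"
  show "Suc (length E) \<le> i"
  proof (rule ccontr)
    assume "\<not> Suc (length E) \<le> i"
    then have "i - 1 < length E" "return_join c E F ! i = E ! (i - 1)"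
      using i by (auto simp: return_join_def nth_append nth_Cons')
    moreover have "fst (E ! (i - 1)) \<le> i - 1"
      using E calculation(1) by (simp add: dyck_def)
    ultimately show False
      using i by auto
  qed
qed

lemma return_join_inj:
  assumes "dyck_path E" "dyck_path F" "dyck_path E'" "dyck_path F'"
    and eq: "return_join c E F = return_join c' E' F'"
  shows "E = E' \<and> F = F'"
proof -
  have len: "length E = length E'"
    using arg_cong[OF eq, of first_return] by (simp add: first_return_return_join assms(1-4))
  then have "E @ map (raise_by (Suc (length E))) F = E' @ map (raise_by (Suc (length E))) F'"
    using eq by (simp add: return_join_def)
  then have "E = E'" "map (raise_by (Suc (length E))) F = map (raise_by (Suc (length E))) F'"
    using len by auto
  then show ?thesis
    using inj_raise_by by (simp add: inj_map_eq_map)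
qed

lemma first_return_bounds:
  assumes D: "dyck n D" and n: "0 < n"
  shows "0 < first_return D" "first_return D \<le> n"
    and "\<And>i. 0 < i \<Longrightarrow> i < first_return D \<Longrightarrow> fst (D ! i) < i"
    and "first_return D < n \<Longrightarrow> fst (D ! first_return D) = first_return D"
proof -
  let ?P = "\<lambda>i. 0 < i \<and> (i = length D \<or> fst (D ! i) = i)"
  have len: "length D = n" and below: "\<And>i. i < n \<Longrightarrow> fst (D ! i) \<le> i"
    using D by (auto simp: dyck_def)
  have "?P n"
    using n len by simp
  then have P: "?P (first_return D)" and le: "first_return D \<le> n"
    unfolding first_return_def by (rule LeastI, rule Least_le)
  then show "0 < first_return D" "first_return D \<le> n"
    by simp_all
  show "first_return D < n \<Longrightarrow> fst (D ! first_return D) = first_return D"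
    using P len by auto
  fix i
  assume "0 < i" "i < first_return D"
  then have "\<not> ?P i"
    unfolding first_return_def using not_less_Least by blast
  then show "fst (D ! i) < i"
    using below[of i] \<open>0 < i\<close> \<open>i < first_return D\<close> le len by fastforce
qed

lemma dyck_take_first_return:
  assumes D: "dyck n D" and n: "0 < n"
  shows "dyck_path (take (first_return D - 1) (tl D))"
proof -
  note k = first_return_bounds[OF D n]
  have "sorted (map fst D)" and len: "length D = n"
    using D by (simp_all add: dyck_def)
  then show ?thesis
    unfolding dyck_def sorted_iff_nth_mono
    using k(1,2) k(3)[of "Suc _"] by (auto simp: nth_tl less_Suc_eq_le sorted_iff_nth_mono)
qed

lemma dyck_drop_first_return:
  assumes D: "dyck n D" and n: "0 < n"
  obtains F where "dyck_path F" "map (raise_by (first_return D)) F = drop (first_return D) D"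
proof
  define k where "k = first_return D"
  note k = first_return_bounds[OF D n, folded k_def]
  have len: "length D = n" and sorted: "sorted (map fst D)"
    and below: "\<And>i. i < n \<Longrightarrow> fst (D ! i) \<le> i"
    using D by (auto simp: dyck_def)
  define F where "F = map (\<lambda>x. (fst x - k, snd x)) (drop k D)"
  have len_F: "length F = n - k" and nth_F: "\<And>i. i < n - k \<Longrightarrow> fst (F ! i) = fst (D ! (k + i)) - k"
    using k(2) len by (simp_all add: F_def)
  have "fst (F ! i) \<le> i" if "i < length F" for i
  proof -
    have "k + i < n"
      using that len_F by linarith
    then show ?thesis
      using below[of "k + i"] nth_F that len_F by simp
  qed
  then show "dyck_path F"
    unfolding dyck_def sorted_iff_nth_mono
    using len_F nth_F k(2) len sorted_nth_mono[OF sorted] by (auto intro: diff_le_mono)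
  have "k \<le> fst x" if x: "x \<in> set (drop k D)" for x
  proof -
    obtain j where "k + j < n" "x = D ! (k + j)"
      using x len k(2) by (force simp: in_set_conv_nth)
    then show ?thesis
      using k(4) sorted_nth_mono[OF sorted, of k "k + j"] len by auto
  qed
  then show "map (raise_by (first_return D)) F = drop (first_return D) D"
    by (simp add: F_def k_def raise_by_def map_idI)
qed

lemma dyck_decompose:
  assumes D: "dyck n D" and n: "0 < n"
  obtains E F where "dyck_path E" "dyck_path F" "D = return_join (snd (D ! 0)) E F"
proof -
  define k where "k = first_return D"
  note k = first_return_bounds[OF D n, folded k_def]
  define E where "E = take (k - 1) (tl D)"
  obtain F where F: "dyck_path F" "map (raise_by k) F = drop k D"
    using dyck_drop_first_return[OF D n] unfolding k_def .
  have len: "length D = n" and "fst (D ! 0) = 0"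
    using D n by (auto simp: dyck_def)
  then have "D = (0, snd (D ! 0)) # E @ drop k D"
    using k(1,2) by (cases D; cases k) (auto simp: E_def)
  moreover have "length E = k - 1"
    using k(1,2) len by (simp add: E_def)
  ultimately have "D = return_join (snd (D ! 0)) E F"
    using F(2) k(1) by (simp add: return_join_def)
  moreover have "dyck_path E"
    unfolding E_def k_def by (rule dyck_take_first_return[OF D n])
  ultimately show ?thesis
    using that F(1) by blast
qed

definition black_start :: "nat \<Rightarrow> cpath set" where
  "black_start n = {F. dyck n F \<and> cond2 F \<and> (F \<noteq> [] \<longrightarrow> \<not> snd (F ! 0))}"

lemma mem_return_join_index:
  "(k, E, F) \<in> (SIGMA k:{1..n}. {E. dyck (k - 1) E \<and> cond2 E \<and> PE E} \<times> black_start (n - k))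
    \<longleftrightarrow> k = Suc (length E) \<and> Suc (length E + length F) = n \<and> dyck_path E \<and> cond2 E \<and> PE E
      \<and> dyck_path F \<and> cond2 F \<and> (F \<noteq> [] \<longrightarrow> \<not> snd (F ! 0))"
  (is "?lhs \<longleftrightarrow> ?rhs")
proof
  assume ?lhs
  then have "1 \<le> k" "k \<le> n" "dyck (k - 1) E" "cond2 E" "PE E" "dyck (n - k) F" "cond2 F"
    "F \<noteq> [] \<longrightarrow> \<not> snd (F ! 0)"
    by (auto simp: black_start_def)
  moreover have "length E = k - 1" "length F = n - k"
    using dyck_length calculation(3,6) by blast+
  ultimately show ?rhs
    by auto
qed (auto simp: black_start_def)

lemma bij_betw_return_join:
  assumes n: "0 < n"
    and Q: "\<And>E F. dyck_path E \<Longrightarrow> dyck_path F \<Longrightarrow> Q (return_join c E F) \<longleftrightarrow> PE E"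
  shows "bij_betw (\<lambda>(k, E, F). return_join c E F)
    (SIGMA k:{1..n}. {E. dyck (k - 1) E \<and> cond2 E \<and> PE E} \<times> black_start (n - k))
    {D. dyck n D \<and> cond2 D \<and> snd (D ! 0) = c \<and> Q D}"
  (is "bij_betw ?h ?S ?T")
proof (rule bij_betwI')
  fix x y
  assume "x \<in> ?S" "y \<in> ?S"
  moreover obtain k E F k' E' F' where xy: "x = (k, E, F)" "y = (k', E', F')"
    by (cases x, cases y)
  ultimately have "k = Suc (length E)" "k' = Suc (length E')"
    and EF: "dyck_path E" "dyck_path F" "dyck_path E'" "dyck_path F'"
    unfolding xy mem_return_join_index by blast+
  then show "(?h x = ?h y) = (x = y)"
    using return_join_inj[OF EF, of c c] xy by auto
next
  fix x
  assume "x \<in> ?S"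
  moreover obtain k E F where x: "x = (k, E, F)"
    by (cases x)
  ultimately show "?h x \<in> ?T"
    unfolding x mem_return_join_index using dyck_return_join by (auto simp: cond2_return_join Q)
next
  fix D
  assume "D \<in> ?T"
  then have D: "dyck n D" "cond2 D" "snd (D ! 0) = c" "Q D"
    by simp_all
  obtain E F where EF: "dyck_path E" "dyck_path F" "D = return_join (snd (D ! 0)) E F"
    using dyck_decompose[OF D(1) n] .
  then have "D = ?h (Suc (length E), E, F)"
    using D(3) by simp
  moreover have "Suc (length E + length F) = n"
    using dyck_length[OF D(1)] arg_cong[OF EF(3), of length] by simp
  ultimately show "\<exists>x \<in> ?S. D = ?h x"
    using D EF(1,2) by (force simp: cond2_return_join Q black_start_def)
qed

lemma finite_black_start: "finite (black_start n)"
  unfolding black_start_def by (rule finite_dyck)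

lemma sum_return_join:
  assumes n: "0 < n"
    and Q: "\<And>E F. dyck_path E \<Longrightarrow> dyck_path F \<Longrightarrow> Q (return_join c E F) \<longleftrightarrow> PE E"
  shows "(\<Sum>D | dyck n D \<and> cond2 D \<and> snd (D ! 0) = c \<and> Q D. f D) =
    (\<Sum>k=1..n. \<Sum>E | dyck (k - 1) E \<and> cond2 E \<and> PE E. \<Sum>F\<in>black_start (n - k). f (return_join c E F))"
proof -
  have "(\<Sum>k=1..n. \<Sum>E | dyck (k - 1) E \<and> cond2 E \<and> PE E. \<Sum>F\<in>black_start (n - k). f (return_join c E F))
      = (\<Sum>(k, E, F) \<in> (SIGMA k:{1..n}. {E. dyck (k - 1) E \<and> cond2 E \<and> PE E} \<times> black_start (n - k)).
          f (return_join c E F))"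
    by (simp add: sum.cartesian_product sum.Sigma finite_dyck finite_black_start split_def)
  also have "\<dots> = (\<Sum>D | dyck n D \<and> cond2 D \<and> snd (D ! 0) = c \<and> Q D. f D)"
    using sum.reindex_bij_betw[OF bij_betw_return_join[where Q = Q and PE = PE, OF n Q]] by (simp add: split_def)
  finally show ?thesis ..
qed

section \<open>Generating functions\<close>

lemma wt_Nil [simp]: "wt s t u v [] = 1"
  by (simp add: wt_def)

lemma fps_nth_gf: "fps_nth (gf X s t u v) n = (if n = 0 then 0 else \<Sum>p\<in>X n. wt s t u v p)"
  by (simp add: gf_def)

lemma fps_nth_const_X_mult:
  fixes a :: "'a::comm_ring_1"
  shows "fps_nth (fps_const a * fps_X * P * Q) n =
    (if n = 0 then 0 else a * (\<Sum>i=0..n - 1. fps_nth P i * fps_nth Q (n - 1 - i)))"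
  by (simp only: mult.assoc fps_mult_left_const_nth fps_X_mult_nth) (simp add: fps_mult_nth)

lemma fps_nth_black_start:
  "fps_nth (1 + fps_const s * gf setB s t u v) j =
    (\<Sum>F\<in>black_start j. if F = [] then 1 else s * wt s t u v F)"
proof (cases j)
  case 0
  then have "black_start j = {[]}"
    by (auto simp: black_start_def dyck_0_iff cond2_def)
  then show ?thesis
    using 0 by (simp add: fps_nth_gf)
next
  case (Suc m)
  then have "black_start j = setB j" and "[] \<notin> setB j"
    by (auto simp: black_start_def setB_def dyck_def)
  then show ?thesis
    using Suc by (auto simp: fps_nth_gf sum_distrib_left intro!: sum.cong)
qed

lemma fps_nth_cond2_paths:
  "fps_nth (fps_const a + fps_const a * gf setR s t u 1 + gf setB s t u 1) i =
    (\<Sum>E | dyck i E \<and> cond2 E. (if E = [] \<or> snd (E ! 0) then a else 1) * wt s t u 1 E)"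
proof (cases i)
  case 0
  then have "{E. dyck i E \<and> cond2 E} = {[]}"
    by (auto simp: dyck_0_iff cond2_def)
  then show ?thesis
    using 0 by (simp add: fps_nth_gf)
next
  case (Suc m)
  then have split: "{E. dyck i E \<and> cond2 E} = setB i \<union> setR i" and "setB i \<inter> setR i = {}"
    by (auto simp: setB_def setR_def)
  moreover have "(\<Sum>E\<in>setB i. (if E = [] \<or> snd (E ! 0) then a else 1) * wt s t u 1 E)
      = (\<Sum>E\<in>setB i. wt s t u 1 E)"
    using Suc by (intro sum.cong) (auto simp: setB_def dest: dyck_length)
  moreover have "(\<Sum>E\<in>setR i. (if E = [] \<or> snd (E ! 0) then a else 1) * wt s t u 1 E)
      = a * (\<Sum>E\<in>setR i. wt s t u 1 E)"
    by (simp add: sum_distrib_left setR_def)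
  ultimately show ?thesis
    using Suc by (simp add: fps_nth_gf sum.union_disjoint finite_dyck setB_def setR_def)
qed

lemma sum_wt_return_join:
  fixes s t u v :: "'a::comm_ring_1"
  assumes n: "0 < n"
    and Q: "\<And>E F. dyck_path E \<Longrightarrow> dyck_path F \<Longrightarrow> Q (return_join c E F) \<longleftrightarrow> PE E"
  shows "(\<Sum>D | dyck n D \<and> cond2 D \<and> snd (D ! 0) = c \<and> Q D. wt s t u v D) =
    (if c then u else 1) * v * (\<Sum>i=0..n - 1.
      (\<Sum>E | dyck i E \<and> cond2 E \<and> PE E. (if \<not> c \<and> (E = [] \<or> snd (E ! 0)) then t else 1) * wt s t u 1 E)
      * (\<Sum>F\<in>black_start (n - 1 - i). if F = [] then 1 else s * wt s t u v F))"
proof -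
  define a where "a = (if c then u else 1) * v"
  define g where "g E = (if \<not> c \<and> (E = [] \<or> snd (E ! 0)) then t else 1) * wt s t u 1 E" for E
  define h where "h F = (if F = [] then 1 else s * wt s t u v F)" for F
  have "(\<Sum>D | dyck n D \<and> cond2 D \<and> snd (D ! 0) = c \<and> Q D. wt s t u v D) =
      (\<Sum>k=1..n. \<Sum>E | dyck (k - 1) E \<and> cond2 E \<and> PE E. \<Sum>F\<in>black_start (n - k).
        wt s t u v (return_join c E F))"
    by (rule sum_return_join[where Q = Q and PE = PE, OF n Q])
  also have "\<dots> = (\<Sum>k=1..n. \<Sum>E | dyck (k - 1) E \<and> cond2 E \<and> PE E. \<Sum>F\<in>black_start (n - k).
      a * (g E * h F))"
  proof (intro sum.cong refl)
    fix k E F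
    assume "E \<in> {E. dyck (k - 1) E \<and> cond2 E \<and> PE E}" and "F \<in> black_start (n - k)"
    then have "dyck_path E" "dyck_path F"
      by (auto simp: black_start_def intro: dyck_path_if_dyck)
    then show "wt s t u v (return_join c E F) = a * (g E * h F)"
      by (simp add: wt_return_join a_def g_def h_def mult.assoc)
  qed
  also have "\<dots> = a * (\<Sum>k=1..n. (\<Sum>E | dyck (k - 1) E \<and> cond2 E \<and> PE E. g E)
      * (\<Sum>F\<in>black_start (n - k). h F))"
    by (simp only: sum_product) (simp only: sum_distrib_left)
  also have "\<dots> = a * (\<Sum>i=0..n - 1. (\<Sum>E | dyck i E \<and> cond2 E \<and> PE E. g E)
      * (\<Sum>F\<in>black_start (n - 1 - i). h F))"
  proof -
    have shift: "{1..n} = {Suc 0..Suc (n - 1)}"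
      using n by auto
    show ?thesis
      unfolding shift sum.shift_bounds_cl_Suc_ivl by simp
  qed
  finally show ?thesis
    unfolding a_def g_def h_def .
qed

lemma gf_return_decomposition:
  fixes s t u v :: "'a::comm_ring_1"
  assumes X: "\<And>n. 0 < n \<Longrightarrow> X n = {D. dyck n D \<and> cond2 D \<and> snd (D ! 0) = c \<and> Q D}"
    and Q: "\<And>E F. dyck_path E \<Longrightarrow> dyck_path F \<Longrightarrow> Q (return_join c E F) \<longleftrightarrow> PE E"
    and P: "\<And>i. fps_nth P i = (\<Sum>E | dyck i E \<and> cond2 E \<and> PE E.
      (if \<not> c \<and> (E = [] \<or> snd (E ! 0)) then t else 1) * wt s t u 1 E)"
  shows "gf X s t u v =
    fps_const ((if c then u else 1) * v) * fps_X * P * (1 + fps_const s * gf setB s t u v)"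
proof (rule fps_ext)
  fix n
  show "fps_nth (gf X s t u v) n =
    fps_nth (fps_const ((if c then u else 1) * v) * fps_X * P * (1 + fps_const s * gf setB s t u v)) n"
  proof (cases "n = 0")
    case True
    then show ?thesis
      by (simp add: fps_nth_gf fps_nth_const_X_mult)
  next
    case False
    then have n: "0 < n"
      by simp
    have "fps_nth (gf X s t u v) n = (\<Sum>D | dyck n D \<and> cond2 D \<and> snd (D ! 0) = c \<and> Q D. wt s t u v D)"
      using n by (simp add: fps_nth_gf X)
    also have "\<dots> = (if c then u else 1) * v *
        (\<Sum>i=0..n - 1. fps_nth P i * fps_nth (1 + fps_const s * gf setB s t u v) (n - 1 - i))"
      unfolding P fps_nth_black_start by (rule sum_wt_return_join[OF n]) (fact Q)
    finally show ?thesis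
      using n by (simp add: fps_nth_const_X_mult)
  qed
qed

lemma gf_setA_eq:
  fixes s t u v :: "'a::comm_ring_1"
  shows "gf setA s t u v =
    fps_const (u * v) * fps_X * (1 + gf setA s t u 1) * (1 + fps_const s * gf setB s t u v)"
proof -
  have "gf setA s t u v = fps_const ((if True then u else 1) * v) * fps_X * (1 + gf setA s t u 1)
      * (1 + fps_const s * gf setB s t u v)"
  proof (rule gf_return_decomposition[where Q = cond1 and PE = cond1])
    fix n :: nat
    assume "0 < n"
    then show "setA n = {D. dyck n D \<and> cond2 D \<and> snd (D ! 0) = True \<and> cond1 D}"
      by (auto simp: setA_def cond1_def dyck_def)
  next
    fix E F
    show "cond1 (return_join True E F) = cond1 E"
      by (simp add: cond1_return_join)
  next
    fix i
    have "{E. dyck i E \<and> cond2 E \<and> cond1 E} = setA i" and "setA 0 = {[]}"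
      by (auto simp: setA_def dyck_0_iff cond1_def cond2_def)
    then show "fps_nth (1 + gf setA s t u 1) i = (\<Sum>E | dyck i E \<and> cond2 E \<and> cond1 E.
        (if \<not> True \<and> (E = [] \<or> snd (E ! 0)) then t else 1) * wt s t u 1 E)"
      by (cases i) (simp_all add: fps_nth_gf)
  qed
  then show ?thesis
    by simp
qed

lemma gf_setB_eq:
  fixes s t u v :: "'a::comm_ring_1"
  shows "gf setB s t u v =
    fps_const v * fps_X * (fps_const t + fps_const t * gf setR s t u 1 + gf setB s t u 1)
      * (1 + fps_const s * gf setB s t u v)"
proof -
  have "gf setB s t u v = fps_const ((if False then u else 1) * v) * fps_X
      * (fps_const t + fps_const t * gf setR s t u 1 + gf setB s t u 1)
      * (1 + fps_const s * gf setB s t u v)"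
    by (rule gf_return_decomposition[where Q = "\<lambda>_. True" and PE = "\<lambda>_. True"])
      (simp_all add: setB_def fps_nth_cond2_paths del: fps_add_nth)
  then show ?thesis
    by simp
qed

lemma gf_setR_eq:
  fixes s t u v :: "'a::comm_ring_1"
  shows "gf setR s t u v =
    fps_const (u * v) * fps_X * (1 + gf setR s t u 1 + gf setB s t u 1)
      * (1 + fps_const s * gf setB s t u v)"
proof -
  have "fps_nth (1 + gf setR s t u 1 + gf setB s t u 1) i = (\<Sum>E | dyck i E \<and> cond2 E. wt s t u 1 E)"
    for i
    using fps_nth_cond2_paths[of 1 s t u i] by simp
  then have "gf setR s t u v = fps_const ((if True then u else 1) * v) * fps_X
      * (1 + gf setR s t u 1 + gf setB s t u 1) * (1 + fps_const s * gf setB s t u v)"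
    by (intro gf_return_decomposition[where Q = "\<lambda>_. True" and PE = "\<lambda>_. True"])
      (simp_all add: setR_def del: fps_add_nth)
  then show ?thesis
    by simp
qed

theorem lemma4p3:
  fixes s t u v :: "'a::comm_ring_1"
  shows "gf setA s t u v =
           fps_const (u * v) * fps_X * (1 + gf setA s t u 1) * (1 + fps_const s * gf setB s t u v) \<and>
         gf setB s t u v =
           fps_const v * fps_X * (fps_const t + fps_const t * gf setR s t u 1 + gf setB s t u 1)
             * (1 + fps_const s * gf setB s t u v) \<and>
         gf setR s t u v =
           fps_const (u * v) * fps_X * (1 + gf setR s t u 1 + gf setB s t u 1)
             * (1 + fps_const s * gf setB s t u v)"
  using gf_setA_eq gf_setB_eq gf_setR_eq by blast

end
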